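(* Let $\mathcal{E}^\ell$ be a left (resp. right) simple infinitesimal earthquake along a geodesic $\ell$ of $\mathbb{H}^2$, and let $S_1,S_2$ be two strata of the lamination $\{\ell\}$. Let $Y=\mathrm{Comp}(S_1,S_2)=K_{S_2}-K_{S_1}=\Lambda(\sigma)$ be the comparison Killing field, and let $\phi_Y(\eta)=\langle(1,\eta),\sigma\rangle$ for $\eta\in\overline{\mathbb{D}^2}$ (on $\mathbb{S}^1$ this is the support function of $Y$). Then $\phi_Y(x)\ge0$ (resp. $\phi_Y(x)\le0$) for every $x$ in the closure $\overline{S_2}\subset\overline{\mathbb{D}^2}$, and $\phi_Y(x)\le0$ (resp. $\phi_Y(x)\ge0$) for every $x\in\overline{S_1}$.
   Context: $\mathbb{R}^{1,2}$ is $\mathbb{R}^3$ with $\langle x,y\rangle=-x_0y_0+x_1y_1+x_2y_2$; $\mathbb{H}^2$ is identified with the Klein disk $\mathbb{D}^2$ (boundary $\mathbb{S}^1$) via $\Pi(x_0,x_1,x_2)=(x_1/x_0,x_2/x_0)$. Killing fields: $\Lambda(\sigma):\eta\mapsto\mathrm{d}_{(1,\eta)}\Pi((1,\eta)\boxtimes\sigma)$ with $\langle x\boxtimes y,v\rangle=\det(x,y,v)$; hyperbolic if $\langle\sigma,\sigma\rangle>0$, axis $\Pi(\mathbb{H}^2\cap\sigma^\perp)$. The support function of a vector field $Y$ on $\mathbb{S}^1$ is $\phi_Y$ with $Y(z)=iz\phi_Y(z)$; for $Y=\Lambda(\sigma)$ it equals $z\mapsto\langle(1,z),\sigma\rangle$.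 A simple infinitesimal earthquake along $\ell$ is an infinitesimal earthquake along the lamination $\{\ell\}$, whose strata are $\ell$ and the two components of $\mathbb{D}^2\setminus\ell$. A left (resp. right) infinitesimal earthquake along a lamination: a vector field on $\mathbb{H}^2$ equal on each stratum $S$ to a Killing field $K_S$, such that for strata $S,S'$, $\mathfrak{a}=K_{S'}-K_S$ vanishes only if one of $S,S'$ is in the closure of the other, and otherwise is hyperbolic with axis $\ell'$ weakly separating $S,S'$ and translating to the left (resp. right) seen from $S$ to $S'$ (for an arc $c$ from $S$ to $S'$ crossing $\ell'$ once at $x_0=c(t_0)$ and $w$ tangent to $\ell'$ at $x_0$ pointing towards $\exp(t\mathfrak{a})x_0$, $t>0$, $(c'(t_0),w)$ is positively, resp. negatively, oriented). *)

theory Defs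
  imports "HOL-Analysis.Analysis"
begin

text \<open>Minkowski space R^{1,2}: vectors of type real^3, components x$1, x$2, x$3
  play the roles of x_0, x_1, x_2.\<close>

definition mink :: "real^3 \<Rightarrow> real^3 \<Rightarrow> real" where
  "mink x y = - x$1 * y$1 + x$2 * y$2 + x$3 * y$3"

definition mcross :: "real^3 \<Rightarrow> real^3 \<Rightarrow> real^3" where
  "mcross x y = vector [ -(x$2 * y$3 - x$3 * y$2),
                          x$3 * y$1 - x$1 * y$3,
                          x$1 * y$2 - x$2 * y$1 ]"

lemma mink_mcross: "mink (mcross x y) v = det (vector [x, y, v] :: real^3^3)"
  by (simp add: mink_def mcross_def det_3 algebra_simps)

definition hyp :: "(real^3) set" where
  "hyp = {x. mink x x = -1 \<and> x$1 > 0}"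

definition Pi_proj :: "real^3 \<Rightarrow> complex" where
  "Pi_proj x = Complex (x$2 / x$1) (x$3 / x$1)"

definition disk :: "complex set" where
  "disk = ball 0 1"

definition lift :: "complex \<Rightarrow> real^3" where
  "lift \<eta> = vector [1, Re \<eta>, Im \<eta>]"

definition Lam :: "real^3 \<Rightarrow> complex \<Rightarrow> complex" where
  "Lam \<sigma> \<eta> = frechet_derivative Pi_proj (at (lift \<eta>)) (mcross (lift \<eta>) \<sigma>)"

definition hyperbolic :: "real^3 \<Rightarrow> bool" where
  "hyperbolic \<sigma> \<longleftrightarrow> mink \<sigma> \<sigma> > 0"

definition axis :: "real^3 \<Rightarrow> complex set" where
  "axis \<sigma> = Pi_proj ` (hyp \<inter> {x. mink x \<sigma> = 0})"

definition phi :: "real^3 \<Rightarrow> complex \<Rightarrow> real" where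
  "phi \<sigma> \<eta> = mink (lift \<eta>) \<sigma>"

text \<open>Geodesics of the Klein disk: open chords with endpoints on the unit circle.\<close>
definition geodesic :: "complex set \<Rightarrow> bool" where
  "geodesic l \<longleftrightarrow> (\<exists>a b. a \<noteq> b \<and> norm a = 1 \<and> norm b = 1 \<and> l = open_segment a b)"

definition lamination_strata :: "complex set set \<Rightarrow> complex set set" where
  "lamination_strata L = L \<union> components (disk - \<Union>L)"

definition weakly_separates :: "complex set \<Rightarrow> complex set \<Rightarrow> complex set \<Rightarrow> bool" where
  "weakly_separates l A B \<longleftrightarrow>
     (\<exists>C C'. C \<in> components (disk - l) \<and> C' \<in> components (disk - l) \<and> C \<noteq> C'
        \<and> A \<subseteq> closure C \<and> B \<subseteq> closure C')"

definition orient :: "complex \<Rightarrow> complex \<Rightarrow> real" where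
  "orient u v = Re u * Im v - Im u * Re v"

text \<open>Integral curves of a vector field (used for t |-> exp(t a) x0).\<close>
definition flow_line :: "(complex \<Rightarrow> complex) \<Rightarrow> (real \<Rightarrow> complex) \<Rightarrow> complex \<Rightarrow> bool" where
  "flow_line X \<gamma> x0 \<longleftrightarrow> \<gamma> 0 = x0 \<and> (\<forall>t. (\<gamma> has_vector_derivative X (\<gamma> t)) (at t))"

definition tangent_towards :: "real^3 \<Rightarrow> complex set \<Rightarrow> complex \<Rightarrow> complex \<Rightarrow> bool" where
  "tangent_towards a l x0 w \<longleftrightarrow>
     w \<noteq> 0 \<and> (\<exists>e>0. \<forall>s. \<bar>s\<bar> < e \<longrightarrow> x0 + of_real s * w \<in> l)
     \<and> (\<forall>\<gamma>. flow_line (Lam a) \<gamma> x0 \<longrightarrow> (\<forall>t>0. \<exists>s>0. \<gamma> t = x0 + of_real s * w))"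

text \<open>The hyperbolic field Lambda(a) with axis l translates to the left (eps = 1)
  resp. right (eps = -1) seen from A to B.\<close>
definition translates :: "real \<Rightarrow> real^3 \<Rightarrow> complex set \<Rightarrow> complex set \<Rightarrow> complex set \<Rightarrow> bool" where
  "translates eps a l A B \<longleftrightarrow>
     (\<forall>c t0 v w. arc c \<and> path_image c \<subseteq> disk \<and> pathstart c \<in> A \<and> pathfinish c \<in> B
        \<and> {t \<in> {0..1}. c t \<in> l} = {t0}
        \<and> (c has_vector_derivative v) (at t0 within {0..1})
        \<and> tangent_towards a l (c t0) w \<and> orient v w \<noteq> 0
        \<longrightarrow> eps * orient v w > 0)"

definition inf_earthquake ::
  "real \<Rightarrow> complex set set \<Rightarrow> (complex \<Rightarrow> complex) \<Rightarrow> (complex set \<Rightarrow> real^3) \<Rightarrow> bool" where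
  "inf_earthquake eps L E K \<longleftrightarrow>
     (\<forall>S\<in>lamination_strata L. \<forall>\<eta>\<in>S. E \<eta> = Lam (K S) \<eta>) \<and>
     (\<forall>S\<in>lamination_strata L. \<forall>S'\<in>lamination_strata L.
        ((\<forall>\<eta>\<in>disk. Lam (K S' - K S) \<eta> = 0) \<longrightarrow> S \<subseteq> closure S' \<or> S' \<subseteq> closure S) \<and>
        (\<not> (\<forall>\<eta>\<in>disk. Lam (K S' - K S) \<eta> = 0) \<longrightarrow>
           hyperbolic (K S' - K S) \<and> weakly_separates (axis (K S' - K S)) S S' \<and>
           translates eps (K S' - K S) (axis (K S' - K S)) S S'))"

definition left_inf_earthquake where "left_inf_earthquake = inf_earthquake 1"
definition right_inf_earthquake where "right_inf_earthquake = inf_earthquake (-1)"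

end

theory Submission
  imports Defs
begin

text \<open>Write \<open>\<sigma> = K S2 - K S1\<close>. The function \<open>phi \<sigma>\<close> is affine on the Klein disk and
  vanishes exactly on the axis of \<open>\<sigma>\<close>, so it has a constant strict sign on each side of the
  axis, opposite signs on the two sides, and by continuity weak signs on their closures. Since
  the axis weakly separates \<open>S1\<close> from \<open>S2\<close>, only the overall sign \<open>\<delta> = \<plusminus>1\<close> remains to
  be determined. The flow of \<open>Lam \<sigma>\<close> preserves the axis and moves its points in the direction
  \<open>axis_dir \<sigma>\<close>. For the straight segment from a point \<open>p\<close> of \<open>S1\<close> to a point \<open>q\<close> of \<open>S2\<close>
  the orientation of the pair (velocity, \<open>axis_dir \<sigma>\<close>) equals \<open>phi \<sigma> q - phi \<sigma> p\<close>. So the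
  translation condition of the earthquake forces \<open>\<delta>\<close> to be the sign \<open>\<epsilon>\<close> of the earthquake.\<close>

text \<open>The axis is the chord \<open>phi \<sigma> = 0\<close> with normal \<open>(\<sigma>$2, \<sigma>$3)\<close>; \<open>axis_dir \<sigma>\<close> is that normal
  rotated by a quarter turn.\<close>

definition axis_dir :: "real^3 \<Rightarrow> complex" where
  "axis_dir \<sigma> = Complex (- \<sigma>$3) (\<sigma>$2)"

lemma phi_conv: "phi \<sigma> \<eta> = - \<sigma>$1 + Re \<eta> * \<sigma>$2 + Im \<eta> * \<sigma>$3"
  by (simp add: phi_def mink_def lift_def)

lemma continuous_on_phi [continuous_intros]: "continuous_on S (phi \<sigma>)"
  unfolding phi_conv[abs_def] by (intro continuous_intros)

lemma phi_affine: "phi \<sigma> ((1 - t) *\<^sub>R p + t *\<^sub>R q) = (1 - t) * phi \<sigma> p + t * phi \<sigma> q"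
  by (simp add: phi_conv algebra_simps)

lemma orient_axis_dir: "orient (q - p) (axis_dir \<sigma>) = phi \<sigma> q - phi \<sigma> p"
  by (simp add: orient_def axis_dir_def phi_conv algebra_simps)

lemma hyperbolic_imp_axis_dir_nonzero:
  assumes "hyperbolic \<sigma>" shows "axis_dir \<sigma> \<noteq> 0"
  using assms by (auto simp: hyperbolic_def mink_def axis_dir_def complex_eq_iff)

lemma has_derivative_Pi_proj:
  assumes "x$1 = 1"
  shows "(Pi_proj has_derivative (\<lambda>v. Complex (v$2 - x$2 * v$1) (v$3 - x$3 * v$1))) (at x)"
proof -
  have Pi_proj_eq: "Pi_proj = (\<lambda>x. of_real (x$2 / x$1) + \<i> * of_real (x$3 / x$1))"
    by (auto simp: Pi_proj_def fun_eq_iff complex_eq_iff)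
  have "((\<lambda>x. of_real (x$2 / x$1) + \<i> * of_real (x$3 / x$1)) has_derivative
     (\<lambda>v. of_real ((v$2 * x$1 - x$2 * v$1) / (x$1 * x$1))
        + \<i> * of_real ((v$3 * x$1 - x$3 * v$1) / (x$1 * x$1)))) (at x)"
    using assms
    by (auto intro!: derivative_eq_intros bounded_linear.has_derivative[OF bounded_linear_vec_nth]
          simp: field_simps)
  then show ?thesis unfolding Pi_proj_eq
    by (rule has_derivative_eq_rhs) (use assms in \<open>auto simp: fun_eq_iff complex_eq_iff\<close>)
qed

lemma Lam_conv:
  "Lam \<sigma> \<eta> = Complex (Im \<eta> * \<sigma>$1 - \<sigma>$3 - Re \<eta> * Im \<eta> * \<sigma>$2 + (Re \<eta>)^2 * \<sigma>$3)
                      (\<sigma>$2 - Re \<eta> * \<sigma>$1 - (Im \<eta>)^2 * \<sigma>$2 + Re \<eta> * Im \<eta> * \<sigma>$3)"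
proof -
  have lift_1: "lift \<eta> $ 1 = 1" by (simp add: lift_def)
  show ?thesis
    unfolding Lam_def frechet_derivative_at[OF has_derivative_Pi_proj[OF lift_1], symmetric]
    by (simp add: mcross_def lift_def power2_eq_square algebra_simps)
qed

lemma Lam_on_axis:
  assumes "phi \<sigma> \<eta> = 0"
  shows "Lam \<sigma> \<eta> = of_real (1 - (Re \<eta>)^2 - (Im \<eta>)^2) * axis_dir \<sigma>"
proof -
  have "\<sigma>$1 = Re \<eta> * \<sigma>$2 + Im \<eta> * \<sigma>$3" using assms by (simp add: phi_conv)
  then show ?thesis
    by (simp add: Lam_conv axis_dir_def complex_eq_iff power2_eq_square algebra_simps)
qed

lemma Lam_vanishing_on_disk_imp_zero:
  assumes "\<forall>\<eta>\<in>disk. Lam \<sigma> \<eta> = 0" shows "\<sigma> = 0"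
proof -
  have "0 \<in> disk" "1/2 \<in> disk" by (auto simp: disk_def)
  with assms have "Lam \<sigma> 0 = 0" "Lam \<sigma> (1/2) = 0" by auto
  then show ?thesis by (auto simp: Lam_conv complex_eq_iff vec_eq_iff forall_3)
qed

lemma cmod_less_1_iff: "cmod \<eta> < 1 \<longleftrightarrow> (Re \<eta>)^2 + (Im \<eta>)^2 < 1"
  by (simp add: cmod_power2[symmetric] abs_square_less_1)

lemma mem_axis_iff:
  assumes "\<eta> \<in> disk"
  shows "\<eta> \<in> axis \<sigma> \<longleftrightarrow> phi \<sigma> \<eta> = 0"
proof
  assume "\<eta> \<in> axis \<sigma>"
  then obtain x where "x \<in> hyp" "mink x \<sigma> = 0" "\<eta> = Pi_proj x"
    unfolding axis_def by auto
  then show "phi \<sigma> \<eta> = 0"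
    by (simp add: hyp_def phi_conv Pi_proj_def mink_def field_simps)
next
  assume phi_0: "phi \<sigma> \<eta> = 0"
  define r where "r = sqrt (1 - (Re \<eta>)^2 - (Im \<eta>)^2)"
  have r: "r > 0" "r^2 = 1 - (Re \<eta>)^2 - (Im \<eta>)^2"
    using assms by (auto simp: r_def disk_def cmod_less_1_iff)
  define x :: "real^3" where "x = vector [1/r, Re \<eta> / r, Im \<eta> / r]"
  have "mink x x = -1" using r
    by (simp add: x_def mink_def power2_eq_square field_simps)
  then have "x \<in> hyp" using r by (simp add: hyp_def x_def)
  moreover have "mink x \<sigma> = 0" using phi_0 r
    by (simp add: x_def mink_def phi_conv field_simps)
  moreover have "Pi_proj x = \<eta>" using r by (simp add: x_def Pi_proj_def complex_eq_iff)
  ultimately show "\<eta> \<in> axis \<sigma>" unfolding axis_def by force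
qed

lemma phi_sign_on_component:
  assumes "C \<in> components (disk - axis \<sigma>)"
  shows "(\<forall>x\<in>C. phi \<sigma> x > 0) \<or> (\<forall>x\<in>C. phi \<sigma> x < 0)"
proof (rule ccontr)
  have nonzero: "phi \<sigma> x \<noteq> 0" if "x \<in> C" for x
    using in_components_subset[OF assms] that mem_axis_iff by blast
  assume "\<not> ?thesis"
  then obtain x y where "x \<in> C" "y \<in> C" "phi \<sigma> x \<le> 0" "phi \<sigma> y \<ge> 0"
    by (meson linorder_not_le)
  moreover have "connected (phi \<sigma> ` C)"
    by (rule connected_continuous_image[OF continuous_on_phi in_components_connected[OF assms]])
  ultimately have "0 \<in> phi \<sigma> ` C"
    using connectedD_interval by fastforce
  with nonzero show False by force
qed

lemma component_eq_if_same_phi_sign: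
  assumes C: "C \<in> components (disk - axis \<sigma>)" and C': "C' \<in> components (disk - axis \<sigma>)"
    and "\<forall>x\<in>C. d * phi \<sigma> x > 0" "\<forall>x\<in>C'. d * phi \<sigma> x > 0"
  shows "C = C'"
proof -
  define H where "H = disk \<inter> {x. d * phi \<sigma> x > 0}"
  have "{x. d * phi \<sigma> x > 0} = {x. inner (of_real d * Complex (\<sigma>$2) (\<sigma>$3)) x > d * \<sigma>$1}"
    by (auto simp: phi_conv inner_complex_def algebra_simps)
  then have "convex H"
    unfolding H_def disk_def by (simp add: convex_Int convex_halfspace_gt)
  then have "connected H" by (rule convex_connected)
  have H_sub: "H \<subseteq> disk - axis \<sigma>"
    using mem_axis_iff by (force simp: H_def)
  have "C \<subseteq> H" "C' \<subseteq> H"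
    using assms in_components_subset by (fastforce simp: H_def)+
  moreover have "H \<subseteq> C" "H \<subseteq> C'"
    using components_maximal[OF C \<open>connected H\<close> H_sub] components_maximal[OF C' \<open>connected H\<close> H_sub]
      \<open>C \<subseteq> H\<close> \<open>C' \<subseteq> H\<close> in_components_nonempty[OF C] in_components_nonempty[OF C']
    by (simp_all add: Int_absorb2)
  ultimately show ?thesis by blast
qed

lemma weakly_separates_axis_phi_sign:
  assumes "weakly_separates (axis \<sigma>) A B"
  obtains \<delta> where "\<delta> = 1 \<or> \<delta> = -1"
    "\<forall>x\<in>closure A. \<delta> * phi \<sigma> x \<le> 0" "\<forall>x\<in>closure B. \<delta> * phi \<sigma> x \<ge> 0"
proof -
  obtain C C' where C: "C \<in> components (disk - axis \<sigma>)" and C': "C' \<in> components (disk - axis \<sigma>)"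
    and "C \<noteq> C'" "A \<subseteq> closure C" "B \<subseteq> closure C'"
    using assms unfolding weakly_separates_def by blast
  then have closures: "closure A \<subseteq> closure C" "closure B \<subseteq> closure C'"
    by (simp_all add: closure_minimal)
  obtain \<delta> where \<delta>: "\<delta> = 1 \<or> \<delta> = -1" "\<forall>x\<in>C. \<delta> * phi \<sigma> x < 0" "\<forall>x\<in>C'. \<delta> * phi \<sigma> x > 0"
  proof -
    have "\<not> ((\<forall>x\<in>C. phi \<sigma> x > 0) \<and> (\<forall>x\<in>C'. phi \<sigma> x > 0))"
      using component_eq_if_same_phi_sign[OF C C', of 1] \<open>C \<noteq> C'\<close> by auto
    moreover have "\<not> ((\<forall>x\<in>C. phi \<sigma> x < 0) \<and> (\<forall>x\<in>C'. phi \<sigma> x < 0))"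
      using component_eq_if_same_phi_sign[OF C C', of "-1"] \<open>C \<noteq> C'\<close> by auto
    ultimately show thesis
      using phi_sign_on_component[OF C] phi_sign_on_component[OF C'] that[of 1] that[of "-1"] by auto
  qed
  have continuous: "continuous_on S (\<lambda>x. \<delta> * phi \<sigma> x)" for S
    by (intro continuous_intros)
  show thesis
  proof (rule that[OF \<delta>(1)])
    show "\<forall>x\<in>closure A. \<delta> * phi \<sigma> x \<le> 0"
    proof
      fix x assume "x \<in> closure A"
      with closures have "x \<in> closure C" by blast
      with \<delta>(2) show "\<delta> * phi \<sigma> x \<le> 0"
        using continuous_le_on_closure[OF continuous, of x C 0] by fastforce
    qed
    show "\<forall>x\<in>closure B. \<delta> * phi \<sigma> x \<ge> 0"
    proof
      fix x assume "x \<in> closure B"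
      with closures have "x \<in> closure C'" by blast
      with \<delta>(3) show "\<delta> * phi \<sigma> x \<ge> 0"
        using continuous_ge_on_closure[OF continuous, of x C' 0] by fastforce
    qed
  qed
qed

lemma scalar_linear_ode_solution:
  fixes f k :: "real \<Rightarrow> real"
  assumes "0 \<le> T" and k: "continuous_on {0..T} k"
    and f': "\<And>t. t \<in> {0..T} \<Longrightarrow> (f has_real_derivative k t * f t) (at t within {0..T})"
    and t: "t \<in> {0..T}"
  shows "f t = f 0 * exp (integral {0..t} k)"
proof -
  define K where "K u = integral {0..u} k" for u
  have K': "(K has_real_derivative k u) (at u within {0..T})" if "u \<in> {0..T}" for u
    unfolding K_def has_real_derivative_iff_has_vector_derivative
    by (rule integral_has_vector_derivative[OF k that])
  have "((\<lambda>u. f u * exp (- K u)) has_real_derivative 0) (at u within {0..T})" if "u \<in> {0..T}" for u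
    using f'[OF that] K'[OF that] by (auto intro!: derivative_eq_intros simp: algebra_simps)
  from has_field_derivative_zero_constant[OF convex_real_interval(5) this]
  obtain c where c: "\<And>u. u \<in> {0..T} \<Longrightarrow> f u * exp (- K u) = c" by blast
  from c[of 0] \<open>0 \<le> T\<close> have "c = f 0" by (simp add: K_def)
  with c[OF t] show ?thesis by (simp add: K_def exp_minus field_simps)
qed

text \<open>Along an integral curve of \<open>Lam \<sigma>\<close>, both \<open>phi \<sigma>\<close> and \<open>1 - |\<eta>|\<^sup>2\<close> obey the
  same linear ODE; hence the axis and the disk are invariant under the flow.\<close>

lemma flow_line_Lam_linear_ode:
  assumes "flow_line (Lam \<sigma>) \<gamma> x0"
  defines "k \<equiv> \<lambda>u. Re (\<gamma> u) * \<sigma>$3 - Im (\<gamma> u) * \<sigma>$2"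
  shows "continuous_on S k"
    and "((\<lambda>u. phi \<sigma> (\<gamma> u)) has_real_derivative k u * phi \<sigma> (\<gamma> u)) (at u within S)"
    and "((\<lambda>u. 1 - (Re (\<gamma> u))^2 - (Im (\<gamma> u))^2) has_real_derivative
           2 * k u * (1 - (Re (\<gamma> u))^2 - (Im (\<gamma> u))^2)) (at u within S)"
proof -
  have \<gamma>': "(\<gamma> has_vector_derivative Lam \<sigma> (\<gamma> u)) (at u within S)" for u
    using assms(1) by (auto simp: flow_line_def intro: has_vector_derivative_at_within)
  then have "continuous_on S \<gamma>"
    by (meson continuous_on_eq_continuous_within has_vector_derivative_continuous)
  then show "continuous_on S k"
    unfolding k_def by (intro continuous_intros)
  show "((\<lambda>u. phi \<sigma> (\<gamma> u)) has_real_derivative k u * phi \<sigma> (\<gamma> u)) (at u within S)"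
    unfolding phi_conv
    by (rule derivative_eq_intros has_field_derivative_Re[OF \<gamma>'] has_field_derivative_Im[OF \<gamma>'] refl)+
       (simp add: Lam_conv k_def power2_eq_square algebra_simps)
  show "((\<lambda>u. 1 - (Re (\<gamma> u))^2 - (Im (\<gamma> u))^2) has_real_derivative
           2 * k u * (1 - (Re (\<gamma> u))^2 - (Im (\<gamma> u))^2)) (at u within S)"
    by (rule derivative_eq_intros has_field_derivative_Re[OF \<gamma>'] has_field_derivative_Im[OF \<gamma>'] refl)+
       (simp add: Lam_conv k_def power2_eq_square algebra_simps)
qed

lemma flow_line_Lam_in_disk:
  assumes "flow_line (Lam \<sigma>) \<gamma> x0" "x0 \<in> disk" "t \<ge> 0"
  shows "\<gamma> t \<in> disk"
proof -
  let ?q = "\<lambda>u. 1 - (Re (\<gamma> u))^2 - (Im (\<gamma> u))^2"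
  note ode = flow_line_Lam_linear_ode[OF assms(1)]
  have q_t: "?q t = ?q 0 * exp (integral {0..t} (\<lambda>u. 2 * (Re (\<gamma> u) * \<sigma>$3 - Im (\<gamma> u) * \<sigma>$2)))"
    by (rule scalar_linear_ode_solution[OF assms(3) continuous_on_mult_left[OF ode(1)] ode(3)])
       (use assms(3) in auto)
  have "?q 0 > 0"
    using assms(1,2) by (simp add: flow_line_def disk_def cmod_less_1_iff)
  then have "?q t > 0"
    unfolding q_t by (intro mult_pos_pos exp_gt_zero)
  then show ?thesis
    by (simp add: disk_def cmod_less_1_iff)
qed

lemma flow_line_Lam_on_axis:
  assumes "flow_line (Lam \<sigma>) \<gamma> x0" "phi \<sigma> x0 = 0" "t \<ge> 0"
  shows "phi \<sigma> (\<gamma> t) = 0"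
proof -
  have "phi \<sigma> (\<gamma> t) = phi \<sigma> (\<gamma> 0) * exp (integral {0..t} (\<lambda>u. Re (\<gamma> u) * \<sigma>$3 - Im (\<gamma> u) * \<sigma>$2))"
    by (rule scalar_linear_ode_solution[OF assms(3) flow_line_Lam_linear_ode(1,2)[OF assms(1)]])
       (use assms(3) in auto)
  with assms(1,2) show ?thesis by (simp add: flow_line_def)
qed

lemma orient_eq_0_imp_real_multiple:
  assumes "orient d w = 0" "w \<noteq> 0"
  shows "d = of_real (Re (d * cnj w) / (cmod w)^2) * w"
proof -
  have real: "d * cnj w = of_real (Re (d * cnj w))"
    using assms(1) by (simp add: orient_def complex_eq_iff algebra_simps)
  have "d * of_real ((cmod w)^2) = d * cnj w * w"
    by (simp only: complex_norm_square mult.assoc mult.commute[of "cnj w" w])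
  also have "\<dots> = of_real (Re (d * cnj w)) * w"
    by (simp only: real[symmetric])
  finally show ?thesis
    using assms(2) by (simp add: field_simps)
qed

lemma flow_line_Lam_along_axis:
  assumes "hyperbolic \<sigma>" "x0 \<in> disk" "phi \<sigma> x0 = 0" and flow: "flow_line (Lam \<sigma>) \<gamma> x0"
    and "t > 0"
  shows "\<exists>s>0. \<gamma> t = x0 + of_real s * axis_dir \<sigma>"
proof -
  define w where "w = axis_dir \<sigma>"
  have "w \<noteq> 0" using hyperbolic_imp_axis_dir_nonzero[OF assms(1)] by (simp add: w_def)
  \<comment> \<open>the coordinate of \<open>\<gamma> u - x0\<close> along \<open>w\<close>; it grows at rate \<open>1 - |\<gamma> u|\<^sup>2 > 0\<close>\<close>
  define s where "s u = Re ((\<gamma> u - x0) * cnj w) / (cmod w)^2" for u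
  have s': "(s has_real_derivative 1 - (Re (\<gamma> u))^2 - (Im (\<gamma> u))^2) (at u)" if "u \<ge> 0" for u
  proof -
    have "(\<gamma> has_vector_derivative Lam \<sigma> (\<gamma> u)) (at u)"
      using flow by (simp add: flow_line_def)
    then have "((\<lambda>u. (\<gamma> u - x0) * cnj w) has_vector_derivative Lam \<sigma> (\<gamma> u) * cnj w) (at u)"
      by (intro has_vector_derivative_mult_left) (simp add: has_vector_derivative_diff_const)
    then have "(s has_real_derivative Re (Lam \<sigma> (\<gamma> u) * cnj w) / (cmod w)^2) (at u)"
      unfolding s_def[abs_def] by (intro DERIV_cdivide has_field_derivative_Re)
    moreover have "Lam \<sigma> (\<gamma> u) = of_real (1 - (Re (\<gamma> u))^2 - (Im (\<gamma> u))^2) * w"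
      using Lam_on_axis flow_line_Lam_on_axis[OF flow assms(3) that] by (simp add: w_def)
    then have "Re (Lam \<sigma> (\<gamma> u) * cnj w) = (1 - (Re (\<gamma> u))^2 - (Im (\<gamma> u))^2) * (cmod w)^2"
      by (simp add: mult.assoc complex_mult_cnj cmod_power2 del: of_real_diff)
    ultimately show ?thesis
      using \<open>w \<noteq> 0\<close> by simp
  qed
  have "s 0 < s t"
  proof (rule DERIV_pos_imp_increasing[OF \<open>t > 0\<close>])
    fix u :: real assume "0 \<le> u" "u \<le> t"
    then have "\<gamma> u \<in> disk" using flow_line_Lam_in_disk[OF flow assms(2)] by simp
    then show "\<exists>y. (s has_real_derivative y) (at u) \<and> y > 0"
      using s'[OF \<open>0 \<le> u\<close>] by (auto simp: disk_def cmod_less_1_iff)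
  qed
  then have "s t > 0"
    using flow by (simp add: s_def flow_line_def)
  have "orient (\<gamma> t - x0) w = 0"
    using orient_axis_dir[of "\<gamma> t" x0 \<sigma>] flow_line_Lam_on_axis[OF flow assms(3)] assms(3,5)
    by (simp add: w_def)
  from orient_eq_0_imp_real_multiple[OF this \<open>w \<noteq> 0\<close>] \<open>s t > 0\<close> show ?thesis
    unfolding s_def w_def by (metis diff_add_cancel add.commute)
qed

lemma tangent_towards_axis_dir:
  assumes "hyperbolic \<sigma>" "x0 \<in> disk" "phi \<sigma> x0 = 0"
  shows "tangent_towards \<sigma> (axis \<sigma>) x0 (axis_dir \<sigma>)"
proof -
  define w where "w = axis_dir \<sigma>"
  have "w \<noteq> 0" using hyperbolic_imp_axis_dir_nonzero[OF assms(1)] by (simp add: w_def)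
  obtain e where "e > 0" "ball x0 e \<subseteq> disk"
    using assms(2) unfolding disk_def by (meson open_ball openE)
  have "x0 + of_real s * w \<in> axis \<sigma>" if "\<bar>s\<bar> < e / cmod w" for s
  proof -
    have "x0 + of_real s * w \<in> disk"
      using that \<open>w \<noteq> 0\<close> \<open>ball x0 e \<subseteq> disk\<close> by (auto simp: dist_norm norm_mult field_simps)
    moreover have "phi \<sigma> (x0 + of_real s * w) = 0"
      using assms(3) by (simp add: phi_conv w_def axis_dir_def algebra_simps)
    ultimately show ?thesis using mem_axis_iff by blast
  qed
  moreover have "e / cmod w > 0" using \<open>e > 0\<close> \<open>w \<noteq> 0\<close> by simp
  ultimately show ?thesis
    unfolding tangent_towards_def w_def[symmetric]
    using \<open>w \<noteq> 0\<close> flow_line_Lam_along_axis[OF assms] unfolding w_def by blast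
qed

lemma translates_axis_imp_phi_increases:
  assumes "hyperbolic \<sigma>" and translates: "translates \<epsilon> \<sigma> (axis \<sigma>) A B"
    and "p \<in> A" "q \<in> B" "p \<in> disk" "q \<in> disk"
    and "phi \<sigma> p * phi \<sigma> q \<le> 0" "phi \<sigma> p \<noteq> phi \<sigma> q"
  shows "\<epsilon> * (phi \<sigma> q - phi \<sigma> p) > 0"
proof -
  define c where "c = linepath p q"
  define t0 where "t0 = phi \<sigma> p / (phi \<sigma> p - phi \<sigma> q)"
  have "t0 \<in> {0..1}"
    using assms(7,8) unfolding t0_def
    by (cases "phi \<sigma> p - phi \<sigma> q > 0") (auto simp: divide_simps mult_le_0_iff)
  have c_disk: "c t \<in> disk" if "t \<in> {0..1}" for t
  proof -
    have "c t \<in> closed_segment p q" using linepath_in_path[OF that] by (simp add: c_def)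
    also have "\<dots> \<subseteq> disk" using assms(5,6) by (intro closed_segment_subset) (auto simp: disk_def)
    finally show ?thesis .
  qed
  have crossing: "{t \<in> {0..1}. c t \<in> axis \<sigma>} = {t0}"
  proof -
    have "c t \<in> axis \<sigma> \<longleftrightarrow> t = t0" if "t \<in> {0..1}" for t
    proof -
      have "c t \<in> axis \<sigma> \<longleftrightarrow> (1 - t) * phi \<sigma> p + t * phi \<sigma> q = 0"
        using mem_axis_iff[OF c_disk[OF that]] by (simp add: c_def linepath_def phi_affine)
      also have "\<dots> \<longleftrightarrow> t = t0"
        using assms(8) by (auto simp: t0_def eq_divide_eq algebra_simps)
      finally show ?thesis .
    qed
    with \<open>t0 \<in> {0..1}\<close> show ?thesis by auto
  qed
  then have "phi \<sigma> (c t0) = 0"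
    using mem_axis_iff[OF c_disk[OF \<open>t0 \<in> {0..1}\<close>]] by auto
  have "p \<noteq> q" using assms(8) by blast
  then have "arc c" by (simp add: c_def arc_linepath)
  moreover have "path_image c \<subseteq> disk" using c_disk by (auto simp: path_image_def)
  moreover have "(c has_vector_derivative (q - p)) (at t0 within {0..1})"
    unfolding c_def by (rule has_vector_derivative_linepath_within)
  moreover have "tangent_towards \<sigma> (axis \<sigma>) (c t0) (axis_dir \<sigma>)"
    using tangent_towards_axis_dir[OF assms(1) c_disk[OF \<open>t0 \<in> {0..1}\<close>] \<open>phi \<sigma> (c t0) = 0\<close>] .
  moreover have "pathstart c \<in> A" "pathfinish c \<in> B"
    using assms(3,4) by (simp_all add: c_def)
  moreover have "orient (q - p) (axis_dir \<sigma>) \<noteq> 0"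
    using assms(8) by (simp add: orient_axis_dir)
  ultimately have "\<epsilon> * orient (q - p) (axis_dir \<sigma>) > 0"
    using translates crossing unfolding translates_def by blast
  then show ?thesis by (simp add: orient_axis_dir)
qed

lemma hyperbolic_phi_nonconstant_on_open:
  assumes "open U" "U \<noteq> {}" "hyperbolic \<sigma>"
  shows "\<exists>x\<in>U. phi \<sigma> x \<noteq> c"
proof (rule ccontr)
  assume "\<not> ?thesis"
  then have const: "\<And>x. x \<in> U \<Longrightarrow> phi \<sigma> x = c" by blast
  obtain x r where "x \<in> U" "r > 0" "ball x r \<subseteq> U"
    using assms(1,2) openE by blast
  then have "x + of_real (r/2) \<in> U" "x + \<i> * of_real (r/2) \<in> U"
    by (auto intro!: subsetD[OF \<open>ball x r \<subseteq> U\<close>] simp: dist_norm norm_mult)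
  with const \<open>x \<in> U\<close>
  have "phi \<sigma> (x + of_real (r/2)) = phi \<sigma> x" "phi \<sigma> (x + \<i> * of_real (r/2)) = phi \<sigma> x"
    by auto
  then have "\<sigma>$2 = 0" "\<sigma>$3 = 0" using \<open>r > 0\<close> by (auto simp: phi_conv)
  with assms(3) show False by (simp add: hyperbolic_def mink_def)
qed

lemma geodesic_stratum:
  assumes "geodesic l" "S \<in> lamination_strata {l}"
  shows "S \<subseteq> disk" "S \<noteq> {}" "S \<noteq> l \<Longrightarrow> open S"
proof -
  obtain a b where ab: "a \<noteq> b" "norm a = 1" "norm b = 1" "l = open_segment a b"
    using assms(1) unfolding geodesic_def by blast
  have "l \<subseteq> disk"
    using ab dist_decreases_open_segment[of _ a b 0] by (auto simp: disk_def)
  have "disk - l = disk - closed_segment a b"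
    using ab by (auto simp: open_segment_def disk_def)
  then have "open (disk - l)"
    by (simp add: disk_def open_Diff)
  have "l \<noteq> {}" using ab by simp
  from assms(2) have "S = l \<or> S \<in> components (disk - l)"
    unfolding lamination_strata_def by auto
  then show "S \<subseteq> disk" "S \<noteq> {}" "S \<noteq> l \<Longrightarrow> open S"
    using \<open>l \<subseteq> disk\<close> \<open>l \<noteq> {}\<close> open_components[OF \<open>open (disk - l)\<close>]
      in_components_subset in_components_nonempty by blast+
qed

lemma distinct_strata_phi_differ:
  assumes "geodesic l" "S1 \<in> lamination_strata {l}" "S2 \<in> lamination_strata {l}" "S1 \<noteq> S2"
    and "hyperbolic \<sigma>"
  shows "\<exists>p\<in>S1. \<exists>q\<in>S2. phi \<sigma> p \<noteq> phi \<sigma> q"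
proof (cases "S1 = l")
  case True
  then have "open S2" using geodesic_stratum(3)[OF assms(1,3)] assms(4) by blast
  obtain p where "p \<in> S1" using geodesic_stratum(2)[OF assms(1,2)] by blast
  with hyperbolic_phi_nonconstant_on_open[OF \<open>open S2\<close> geodesic_stratum(2)[OF assms(1,3)] assms(5)]
  show ?thesis by metis
next
  case False
  then have "open S1" using geodesic_stratum(3)[OF assms(1,2)] by blast
  obtain q where "q \<in> S2" using geodesic_stratum(2)[OF assms(1,3)] by blast
  with hyperbolic_phi_nonconstant_on_open[OF \<open>open S1\<close> geodesic_stratum(2)[OF assms(1,2)] assms(5)]
  show ?thesis by metis
qed

lemma inf_earthquake_single_geodesic_phi_sign:
  assumes "geodesic l" and S1: "S1 \<in> lamination_strata {l}" and S2: "S2 \<in> lamination_strata {l}"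
    and earthquake: "inf_earthquake \<epsilon> {l} E K" and "\<epsilon> = 1 \<or> \<epsilon> = -1"
  shows "(\<forall>x\<in>closure S2. \<epsilon> * phi (K S2 - K S1) x \<ge> 0) \<and>
         (\<forall>x\<in>closure S1. \<epsilon> * phi (K S2 - K S1) x \<le> 0)"
proof (cases "\<forall>\<eta>\<in>disk. Lam (K S2 - K S1) \<eta> = 0")
  case True
  then have "K S2 - K S1 = 0" by (rule Lam_vanishing_on_disk_imp_zero)
  then show ?thesis by (simp add: phi_conv)
next
  case False
  define \<sigma> where "\<sigma> = K S2 - K S1"
  from earthquake S1 S2 False have "hyperbolic \<sigma>" and "weakly_separates (axis \<sigma>) S1 S2"
    and "translates \<epsilon> \<sigma> (axis \<sigma>) S1 S2"
    unfolding inf_earthquake_def \<sigma>_def by blast+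
  obtain \<delta> where \<delta>: "\<delta> = 1 \<or> \<delta> = -1"
    "\<forall>x\<in>closure S1. \<delta> * phi \<sigma> x \<le> 0" "\<forall>x\<in>closure S2. \<delta> * phi \<sigma> x \<ge> 0"
    using weakly_separates_axis_phi_sign[OF \<open>weakly_separates (axis \<sigma>) S1 S2\<close>] by blast
  have "S1 \<noteq> S2" using False by (auto simp: Lam_conv complex_eq_iff)
  then obtain p q where pq: "p \<in> S1" "q \<in> S2" "phi \<sigma> p \<noteq> phi \<sigma> q"
    using distinct_strata_phi_differ[OF assms(1-3) _ \<open>hyperbolic \<sigma>\<close>] by blast
  have "p \<in> disk" "q \<in> disk"
    using pq(1,2) geodesic_stratum(1)[OF assms(1)] S1 S2 by blast+
  have "\<delta> * phi \<sigma> p \<le> 0" "\<delta> * phi \<sigma> q \<ge> 0"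
    using pq \<delta> closure_subset by blast+
  then have "phi \<sigma> p * phi \<sigma> q \<le> 0" "\<delta> * (phi \<sigma> q - phi \<sigma> p) > 0"
    using \<delta>(1) pq(3) by (auto simp: mult_le_0_iff)
  moreover have "\<epsilon> * (phi \<sigma> q - phi \<sigma> p) > 0"
    by (rule translates_axis_imp_phi_increases[OF \<open>hyperbolic \<sigma>\<close> \<open>translates \<epsilon> \<sigma> (axis \<sigma>) S1 S2\<close>
          pq(1,2) \<open>p \<in> disk\<close> \<open>q \<in> disk\<close> calculation(1) pq(3)])
  ultimately have "\<delta> = \<epsilon>"
    using \<delta>(1) \<open>\<epsilon> = 1 \<or> \<epsilon> = -1\<close> by auto
  with \<delta> show ?thesis by (simp add: \<sigma>_def)
qed

theorem lemma3p11:
  fixes l :: "complex set" and E :: "complex \<Rightarrow> complex" and K :: "complex set \<Rightarrow> real^3"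
    and S1 S2 :: "complex set"
  assumes "geodesic l"
    and "S1 \<in> lamination_strata {l}" and "S2 \<in> lamination_strata {l}"
  shows "(left_inf_earthquake {l} E K \<longrightarrow>
            (\<forall>x\<in>closure S2. phi (K S2 - K S1) x \<ge> 0) \<and>
            (\<forall>x\<in>closure S1. phi (K S2 - K S1) x \<le> 0)) \<and>
         (right_inf_earthquake {l} E K \<longrightarrow>
            (\<forall>x\<in>closure S2. phi (K S2 - K S1) x \<le> 0) \<and>
            (\<forall>x\<in>closure S1. phi (K S2 - K S1) x \<ge> 0))"
  using inf_earthquake_single_geodesic_phi_sign[OF assms, of 1 E K]
    inf_earthquake_single_geodesic_phi_sign[OF assms, of "-1" E K]
  by (auto simp: left_inf_earthquake_def right_inf_earthquake_def)

end
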